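(* Let $n\ge 2$, let $\ket{\Psi}=\frac{1}{\sqrt2}(\ket{0}^{\otimes n}+\ket{1}^{\otimes n})$, and for a real $\theta$ let $R_z(\theta)=\begin{pmatrix}e^{-i\theta/2}&0\\0&e^{i\theta/2}\end{pmatrix}$. For $0\le j\le\lceil\log_2 n\rceil$ consider round $j$: first $R_z(-\pi/2^j)$ is applied to the first qubit of a fresh copy of $\ket{\Psi}$ (producing $\ket{t_j}$); then each of a set $K$ of $k$ players (qubits) applies $R_z(\pi/2^j)$ to his own qubit; then $H^{\otimes n}$ is applied ($H$ the Hadamard gate) and all $n$ qubits are measured in the computational basis, giving $x\in\{0,1\}^n$. Then: (i) if $2\le k\le n$, there exists $j\in\{0,\dots,\lceil\log_2 n\rceil\}$ such that in round $j$ the outcome $x$ has odd Hamming weight with probability $1$ (the state before the Hadamard transforms equals, up to global phase, $\frac{1}{\sqrt2}(\ket{0}^{\otimes n}-\ket{1}^{\otimes n})$); (ii) if $k=1$, then in every round $j$ the outcome $x$ has even Hamming weight with probability $1$ (the state before the Hadamard transforms equals $\ket{\Psi}$ up to global phase).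
   Context: Qubits are indexed by players; an operator applied by a player acts only on that player's tensor factor. The rotations applied in a round act on distinct or identical qubits of the same $n$-qubit state. *)

theory Defs
  imports Complex_Main
begin

text \<open>n-qubit states: qubits are indexed 0..n-1 (qubit 0 is the "first qubit");
  a computational basis vector is given by the set S \<subseteq> {0..<n} of qubits in state 1.
  A state is a function from basis labels to amplitudes.\<close>

type_synonym qstate = "nat set \<Rightarrow> complex"

text \<open>A single-qubit gate is a 2x2 matrix U, written as U out inp (False = 0, True = 1).\<close>
type_synonym gate = "bool \<Rightarrow> bool \<Rightarrow> complex"

definition apply1 :: "nat \<Rightarrow> gate \<Rightarrow> qstate \<Rightarrow> qstate" where
  "apply1 q U \<psi> = (\<lambda>S. \<Sum>b\<in>(UNIV::bool set). U (q \<in> S) b * \<psi> (if b then insert q S else S - {q}))"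

definition Rz :: "real \<Rightarrow> gate" where
  "Rz \<theta> = (\<lambda>out inp. if out = inp then
       (if out then exp (\<i> * complex_of_real (\<theta> / 2)) else exp (- \<i> * complex_of_real (\<theta> / 2)))
     else 0)"

definition Had :: gate where
  "Had = (\<lambda>out inp. (if out \<and> inp then -1 else 1) / complex_of_real (sqrt 2))"

definition GHZ :: "nat \<Rightarrow> qstate" where
  "GHZ n = (\<lambda>S. if S = {} \<or> S = {0..<n} then 1 / complex_of_real (sqrt 2) else 0)"

definition GHZminus :: "nat \<Rightarrow> qstate" where
  "GHZminus n = (\<lambda>S. if S = {} then 1 / complex_of_real (sqrt 2)
                     else if S = {0..<n} then - 1 / complex_of_real (sqrt 2) else 0)"

definition pre_state :: "nat \<Rightarrow> nat list \<Rightarrow> nat \<Rightarrow> qstate" where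
  "pre_state n ks j =
     foldr (\<lambda>q \<psi>. apply1 q (Rz (pi / 2 ^ j)) \<psi>) ks (apply1 0 (Rz (- pi / 2 ^ j)) (GHZ n))"

definition hadamard_all :: "nat \<Rightarrow> qstate \<Rightarrow> qstate" where
  "hadamard_all n \<psi> = foldr (\<lambda>q \<phi>. apply1 q Had \<phi>) [0..<n] \<psi>"

definition final_state :: "nat \<Rightarrow> nat list \<Rightarrow> nat \<Rightarrow> qstate" where
  "final_state n ks j = hadamard_all n (pre_state n ks j)"

definition prob_weight :: "nat \<Rightarrow> (nat \<Rightarrow> bool) \<Rightarrow> qstate \<Rightarrow> real" where
  "prob_weight n P \<phi> = (\<Sum>S\<in>{S. S \<subseteq> {0..<n} \<and> P (card S)}. (cmod (\<phi> S))\<^sup>2)"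

end

theory Submission
  imports Defs
begin

text \<open>Every rotation R_z multiplies the two branches of the GHZ state by opposite phases, so up to a
  global phase round j produces (|0...0> + w |1...1>)/sqrt 2 with relative phase
  w = e^(i (k - 1) pi / 2^j). The Hadamard transform
  maps this state to the amplitudes (1 + w (-1)^|x|) / sqrt 2^(n+1), so for w = 1 (resp. w = -1)
  all outcomes have even (resp. odd) Hamming weight. For k = 1 the phase is 1 in every round. For
  2 <= k <= n write k - 1 = 2^j r with r odd: in round j the phase is e^(i r pi) = -1, and
  2^j <= k - 1 < n gives j <= ceil (log 2 n).\<close>

lemma apply1_diagonal:
  assumes "D True False = 0" "D False True = 0"
  shows "apply1 q D \<psi> S = D (q \<in> S) (q \<in> S) * \<psi> S"
  using assms by (cases "q \<in> S") (auto simp: apply1_def UNIV_bool insert_absorb)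

lemma apply1_Rz: "apply1 q (Rz \<theta>) \<psi> S = cis (if q \<in> S then \<theta> / 2 else - \<theta> / 2) * \<psi> S"
  by (subst apply1_diagonal) (auto simp: Rz_def cis_conv_exp)

lemma foldr_apply1_Rz:
  "foldr (\<lambda>q \<psi>. apply1 q (Rz \<theta>) \<psi>) qs \<psi> S
     = (\<Prod>q\<leftarrow>qs. cis (if q \<in> S then \<theta> / 2 else - \<theta> / 2)) * \<psi> S"
  by (induction qs) (auto simp: apply1_Rz)

definition ghz_phase :: "nat \<Rightarrow> complex \<Rightarrow> qstate" where
  "ghz_phase n \<omega> = (\<lambda>S. if S = {} then 1 / complex_of_real (sqrt 2)
                        else if S = {0..<n} then \<omega> / complex_of_real (sqrt 2) else 0)"

lemma GHZ_eq_ghz_phase: "GHZ n = ghz_phase n 1"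
  by (auto simp: GHZ_def ghz_phase_def fun_eq_iff)

lemma GHZminus_eq_ghz_phase: "GHZminus n = ghz_phase n (-1)"
  by (auto simp: GHZminus_def ghz_phase_def fun_eq_iff)

lemma pre_state_eq_ghz_phase:
  fixes j :: nat
  assumes "set ks \<subseteq> {0..<n}"
  defines "\<theta> \<equiv> pi / 2 ^ j" and "m \<equiv> real (length ks) - 1"
  shows "pre_state n ks j = (\<lambda>S. cis (- m * \<theta> / 2) * ghz_phase n (cis (m * \<theta>)) S)"
proof
  fix S
  have pre: "pre_state n ks j T =
      (\<Prod>q\<leftarrow>ks. cis (if q \<in> T then \<theta> / 2 else - \<theta> / 2)) * cis (if 0 \<in> T then - \<theta> / 2 else \<theta> / 2)
        * GHZ n T" for T
    unfolding \<theta>_def by (simp add: pre_state_def foldr_apply1_Rz apply1_Rz)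
  consider "S = {}" | "S \<noteq> {}" "S = {0..<n}" | "S \<noteq> {}" "S \<noteq> {0..<n}" by blast
  then show "pre_state n ks j S = cis (- m * \<theta> / 2) * ghz_phase n (cis (m * \<theta>)) S"
  proof cases
    case 1
    then have "pre_state n ks j S = cis (- \<theta> / 2) ^ length ks * cis (\<theta> / 2) / sqrt 2"
      by (simp add: pre GHZ_def map_replicate_const)
    also have "\<dots> = cis (- m * \<theta> / 2) / sqrt 2"
      by (simp add: DeMoivre cis_mult m_def algebra_simps diff_divide_distrib)
    finally show ?thesis using 1 by (simp add: ghz_phase_def)
  next
    case 2
    have "map (\<lambda>q. cis (if q \<in> S then \<theta> / 2 else - \<theta> / 2)) ks = map (\<lambda>_. cis (\<theta> / 2)) ks"
      using assms(1) 2 by (intro map_cong) auto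
    then have "pre_state n ks j S = cis (\<theta> / 2) ^ length ks * cis (- \<theta> / 2) / sqrt 2"
      using 2 by (auto simp: pre GHZ_def map_replicate_const)
    also have "\<dots> = cis (- m * \<theta> / 2) * (cis (m * \<theta>) / sqrt 2)"
      by (simp add: DeMoivre cis_mult m_def algebra_simps diff_divide_distrib)
    finally show ?thesis using 2 by (simp add: ghz_phase_def)
  next
    case 3
    then show ?thesis by (simp add: pre GHZ_def ghz_phase_def)
  qed
qed

lemma apply1_Had:
  "apply1 q Had \<psi> S
     = ((if q \<in> S then -1 else 1) * \<psi> (insert q S) + \<psi> (S - {q})) / complex_of_real (sqrt 2)"
  by (simp add: apply1_def Had_def UNIV_bool add_divide_distrib)

lemma foldr_apply1_Had:
  fixes \<psi> :: qstate
  assumes "distinct qs"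
  shows "foldr (\<lambda>q \<phi>. apply1 q Had \<phi>) qs \<psi> S
    = (\<Sum>T\<in>Pow (set qs). (-1) ^ card (S \<inter> T) * \<psi> (S - set qs \<union> T)) / complex_of_real (sqrt 2) ^ length qs"
  using assms
proof (induction qs arbitrary: S)
  case Nil
  then show ?case by simp
next
  case (Cons q qs)
  let ?Q = "set qs" and ?F = "foldr (\<lambda>q \<phi>. apply1 q Had \<phi>) qs \<psi>"
  define \<sigma> where "\<sigma> T = (-1::complex) ^ card (S \<inter> T) * \<psi> (S - insert q ?Q \<union> T)" for T
  define s where "s = complex_of_real (sqrt 2)"
  have q: "q \<notin> ?Q" and IH: "?F S' = (\<Sum>T\<in>Pow ?Q. (-1) ^ card (S' \<inter> T) * \<psi> (S' - ?Q \<union> T)) / s ^ length qs" for S'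
    using Cons by (auto simp: s_def)
  have "(S - {q}) \<inter> T = S \<inter> T" "S - {q} - ?Q \<union> T = S - insert q ?Q \<union> T" if "T \<subseteq> ?Q" for T
    using q that by auto
  then have F_del: "?F (S - {q}) = (\<Sum>T\<in>Pow ?Q. \<sigma> T) / s ^ length qs"
    unfolding IH \<sigma>_def by (auto intro!: sum.cong)
  have F_ins: "(if q \<in> S then -1 else 1) * ?F (insert q S) = (\<Sum>T\<in>Pow ?Q. \<sigma> (insert q T)) / s ^ length qs"
  proof -
    have "\<sigma> (insert q T) = (if q \<in> S then -1 else 1) * ((-1) ^ card (insert q S \<inter> T) * \<psi> (insert q S - ?Q \<union> T))"
      if "T \<subseteq> ?Q" for T
    proof -
      have "S \<inter> insert q T = (if q \<in> S then insert q (S \<inter> T) else S \<inter> T)" "insert q S \<inter> T = S \<inter> T"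
        "S - insert q ?Q \<union> insert q T = insert q S - ?Q \<union> T"
        using q that by auto
      moreover have "finite (S \<inter> T)" "q \<notin> S \<inter> T"
        using q that finite_subset[of T ?Q] by auto
      ultimately show ?thesis by (simp add: \<sigma>_def)
    qed
    then show ?thesis
      unfolding IH by (simp add: sum_distrib_left mult.assoc[symmetric])
  qed
  have Pow_split: "(\<Sum>T\<in>Pow (insert q ?Q). \<sigma> T) = (\<Sum>T\<in>Pow ?Q. \<sigma> T) + (\<Sum>T\<in>Pow ?Q. \<sigma> (insert q T))"
  proof -
    have "inj_on (insert q) (Pow ?Q)"
      using q by (intro inj_onI) (metis Diff_insert_absorb PowD in_mono)
    then show ?thesis
      unfolding Pow_insert using q by (subst sum.union_disjoint) (auto simp: sum.reindex)
  qed
  have "foldr (\<lambda>q \<phi>. apply1 q Had \<phi>) (q # qs) \<psi> S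
      = ((if q \<in> S then -1 else 1) * ?F (insert q S) + ?F (S - {q})) / s"
    by (simp only: foldr_Cons o_apply apply1_Had s_def)
  also have "\<dots> = (\<Sum>T\<in>Pow (insert q ?Q). \<sigma> T) / s ^ length (q # qs)"
    by (simp add: F_ins F_del Pow_split add_divide_distrib mult.commute)
  finally show ?case
    by (simp add: \<sigma>_def s_def)
qed

lemma hadamard_all_eq_sum:
  assumes "S \<subseteq> {0..<n}"
  shows "hadamard_all n \<psi> S
    = (\<Sum>T\<in>Pow {0..<n}. (-1) ^ card (S \<inter> T) * \<psi> T) / complex_of_real (sqrt 2) ^ n"
  using assms by (simp add: hadamard_all_def foldr_apply1_Had Diff_eq_empty_iff[THEN iffD2])

lemma hadamard_all_scale: "hadamard_all n (\<lambda>S. c * \<psi> S) = (\<lambda>S. c * hadamard_all n \<psi> S)"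
  by (simp add: fun_eq_iff hadamard_all_def foldr_apply1_Had sum_distrib_left mult_ac)

lemma hadamard_all_ghz_phase:
  assumes "n \<ge> 1" "S \<subseteq> {0..<n}"
  shows "hadamard_all n (ghz_phase n \<omega>) S = (1 + \<omega> * (-1) ^ card S) / complex_of_real (sqrt 2) ^ Suc n"
proof -
  have ne: "{0..<n} \<noteq> {}"
    using assms(1) by simp
  have "(\<Sum>T\<in>Pow {0..<n}. (-1) ^ card (S \<inter> T) * ghz_phase n \<omega> T)
      = (\<Sum>T\<in>{{}, {0..<n}}. (-1) ^ card (S \<inter> T) * ghz_phase n \<omega> T)"
    by (rule sum.mono_neutral_right) (auto simp: ghz_phase_def)
  also have "\<dots> = (1 + \<omega> * (-1) ^ card S) / complex_of_real (sqrt 2)"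
    using ne assms(2) by (simp add: ghz_phase_def Int_absorb2 add_divide_distrib mult.commute)
  finally show ?thesis
    using assms(2) by (simp add: hadamard_all_eq_sum)
qed

lemma prob_weight_scale: "cmod c = 1 \<Longrightarrow> prob_weight n P (\<lambda>S. c * \<phi> S) = prob_weight n P \<phi>"
  by (simp add: prob_weight_def norm_mult)

lemma card_even_subsets:
  assumes "finite U" "U \<noteq> {}"
  shows "card {S. S \<subseteq> U \<and> even (card S)} = 2 ^ (card U - 1)"
proof -
  let ?E = "{S. S \<subseteq> U \<and> even (card S)}" and ?O = "{S. S \<subseteq> U \<and> odd (card S)}"
  have "card ?E = card ?O"
    using card_subsupersets_even_odd[of U "{}"] assms by auto
  moreover have "card ?E + card ?O = 2 ^ card U"
  proof -
    have "card ?E + card ?O = card (?E \<union> ?O)"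
      using assms(1) by (intro card_Un_disjoint[symmetric]) auto
    also have "?E \<union> ?O = Pow U" by auto
    finally show ?thesis
      using assms(1) by (simp add: card_Pow)
  qed
  moreover have "card U \<ge> 1"
    using assms by (simp add: Suc_le_eq card_gt_0_iff)
  ultimately show ?thesis
    by (cases "card U") auto
qed

lemma card_odd_subsets:
  assumes "finite U" "U \<noteq> {}"
  shows "card {S. S \<subseteq> U \<and> odd (card S)} = 2 ^ (card U - 1)"
proof -
  have "{} \<subset> U"
    using assms(2) by blast
  then show ?thesis
    using card_subsupersets_even_odd[of U "{}"] card_even_subsets[OF assms] assms(1) by simp
qed

lemma prob_weight_hadamard_ghz_phase:
  assumes "n \<ge> 1" and P_card: "card {S. S \<subseteq> {0..<n} \<and> P (card S)} = 2 ^ (n - 1)"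
    and P_phase: "\<And>m. P m \<Longrightarrow> \<omega> * (-1) ^ m = 1"
  shows "prob_weight n P (hadamard_all n (ghz_phase n \<omega>)) = 1"
proof -
  have "cmod (2 / complex_of_real (sqrt 2) ^ Suc n) = 2 / sqrt (2 ^ Suc n)"
    by (simp add: norm_divide norm_power real_sqrt_power del: power_Suc)
  then have "(cmod (2 / complex_of_real (sqrt 2) ^ Suc n))\<^sup>2 = 4 / 2 ^ Suc n"
    by (simp add: power_divide del: power_Suc)
  also have "\<dots> = 1 / 2 ^ (n - 1)"
    using assms(1) by (cases n) auto
  finally have amplitude: "(cmod (hadamard_all n (ghz_phase n \<omega>) S))\<^sup>2 = 1 / 2 ^ (n - 1)"
    if "S \<subseteq> {0..<n}" "P (card S)" for S
    using that assms(1) P_phase by (simp add: hadamard_all_ghz_phase one_add_one)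
  have "prob_weight n P (hadamard_all n (ghz_phase n \<omega>)) = (\<Sum>S | S \<subseteq> {0..<n} \<and> P (card S). 1 / 2 ^ (n - 1))"
    unfolding prob_weight_def by (rule sum.cong) (auto simp: amplitude)
  also have "\<dots> = 1"
    by (simp add: P_card)
  finally show ?thesis .
qed

lemma prob_weight_even_hadamard_GHZ: "n \<ge> 1 \<Longrightarrow> prob_weight n even (hadamard_all n (GHZ n)) = 1"
  unfolding GHZ_eq_ghz_phase
  by (rule prob_weight_hadamard_ghz_phase) (auto simp: card_even_subsets)

lemma prob_weight_odd_hadamard_GHZminus: "n \<ge> 1 \<Longrightarrow> prob_weight n odd (hadamard_all n (GHZminus n)) = 1"
  unfolding GHZminus_eq_ghz_phase
  by (rule prob_weight_hadamard_ghz_phase) (auto simp: card_odd_subsets)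

lemma pre_state_single_player:
  assumes "set ks \<subseteq> {0..<n}" "length ks = 1"
  shows "pre_state n ks j = GHZ n"
  using pre_state_eq_ghz_phase[OF assms(1), of j] assms(2) by (simp add: GHZ_eq_ghz_phase)

lemma pre_state_odd_multiple:
  assumes "set ks \<subseteq> {0..<n}" "length ks = Suc (2 ^ j * r)" "odd r"
  shows "pre_state n ks j = (\<lambda>S. cis (- r * pi / 2) * GHZminus n S)"
proof -
  have "real (length ks) - 1 = 2 ^ j * r"
    using assms(2) by simp
  moreover have "cis (r * pi) = -1"
    using assms(3) by (simp flip: DeMoivre)
  ultimately show ?thesis
    using pre_state_eq_ghz_phase[OF assms(1), of j] by (simp add: GHZminus_eq_ghz_phase)
qed

lemma nat_eq_two_power_times_odd: "(m::nat) > 0 \<Longrightarrow> \<exists>j r. m = 2 ^ j * r \<and> odd r"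
proof (induction m rule: less_induct)
  case (less m)
  show ?case
  proof (cases "odd m")
    case True
    then show ?thesis by (intro exI[of _ 0] exI[of _ m]) simp
  next
    case False
    then obtain m' where m': "m = 2 * m'" by (auto elim: evenE)
    with less.prems have "m' < m" "m' > 0" by auto
    with less.IH obtain j r where "m' = 2 ^ j * r" "odd r" by blast
    then show ?thesis using m' by (intro exI[of _ "Suc j"] exI[of _ r]) simp
  qed
qed

theorem mainTheorem7:
  fixes n k :: nat and ks :: "nat list"
  assumes "n \<ge> 2"
    and "distinct ks" and "set ks \<subseteq> {0..<n}" and "length ks = k"
  shows "(2 \<le> k \<and> k \<le> n \<longrightarrow>
            (\<exists>j \<le> nat \<lceil>log 2 (real n)\<rceil>.
               prob_weight n odd (final_state n ks j) = 1 \<and>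
               (\<exists>c. cmod c = 1 \<and> pre_state n ks j = (\<lambda>S. c * GHZminus n S))))
       \<and> (k = 1 \<longrightarrow>
            (\<forall>j \<le> nat \<lceil>log 2 (real n)\<rceil>.
               prob_weight n even (final_state n ks j) = 1 \<and>
               (\<exists>c. cmod c = 1 \<and> pre_state n ks j = (\<lambda>S. c * GHZ n S))))"
proof (intro conjI impI)
  assume k: "2 \<le> k \<and> k \<le> n"
  then obtain j r where jr: "k - 1 = 2 ^ j * r" "odd r"
    using nat_eq_two_power_times_odd[of "k - 1"] by auto
  have "2 ^ j \<le> k - 1"
    using jr odd_pos[of r] by simp
  with k have "2 ^ j < n"
    by linarith
  then have j_le: "j \<le> nat \<lceil>log 2 (real n)\<rceil>"
    using less_log2_of_power[of j n] by linarith
  have "length ks = Suc (2 ^ j * r)"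
    using jr(1) k assms(4) by linarith
  then have pre: "pre_state n ks j = (\<lambda>S. cis (- real r * pi / 2) * GHZminus n S)"
    using pre_state_odd_multiple[OF assms(3) _ jr(2)] by blast
  have "prob_weight n odd (final_state n ks j) = 1"
    using prob_weight_odd_hadamard_GHZminus assms(1)
    by (simp add: final_state_def pre hadamard_all_scale prob_weight_scale)
  with pre j_le show "\<exists>j \<le> nat \<lceil>log 2 (real n)\<rceil>.
      prob_weight n odd (final_state n ks j) = 1 \<and>
      (\<exists>c. cmod c = 1 \<and> pre_state n ks j = (\<lambda>S. c * GHZminus n S))"
    by (intro exI[of _ j] conjI exI[of _ "cis (- real r * pi / 2)"]) auto
next
  assume "k = 1"
  then have "pre_state n ks j = GHZ n" for j
    using pre_state_single_player assms(3,4) by simp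
  then show "\<forall>j \<le> nat \<lceil>log 2 (real n)\<rceil>.
      prob_weight n even (final_state n ks j) = 1 \<and>
      (\<exists>c. cmod c = 1 \<and> pre_state n ks j = (\<lambda>S. c * GHZ n S))"
    using prob_weight_even_hadamard_GHZ assms(1) by (auto simp: final_state_def intro: exI[of _ 1])
qed

end
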